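(* For any valid scheme (satisfying (C1)–(C8)) with $N\ge1$, $K\ge2$, \[ \rho_S-\rho_U\ \ge\ \frac1N+\frac1{N^2}+\dots+\frac1{N^{K-1}}. \]
   Context: Model (SPIR with user-side common randomness). There are $N\ge1$ non-colluding databases, each storing the same $K\ge2$ messages $W_1,\dots,W_K$. Each message consists of $L$ i.i.d. symbols uniform over a sufficiently large finite field $\mathbb{F}_q$; entropies are in $q$-ary units, so $H(W_k)=L$ and $H(W_{1:K})=KL$. The databases share server-side common randomness $\mathcal{R}_S$, unknown to the user. The user holds user-side common randomness $\mathcal{R}_U$, a subset of the components of $\mathcal{R}_S$, unknown to the databases except for its size (uniform over subsets of given cardinality); in particular $H(\mathcal{R}_S\setminus\mathcal{R}_U)=H(\mathcal{R}_S)-H(\mathcal{R}_U)$. $\mathcal{F}$ is the user's retrieval-strategy randomness. To retrieve $W_k$ the user sends $Q_n^{[k,\mathcal{R}_U]}$ to database $n$, receiving $A_n^{[k,\mathcal{R}_U]}$; $W_{\bar k}=\{W_j:j\ne k\}$. A valid scheme satisfies for all $k,n,\mathcal{R}_U$: (C1) $I(W_{1:K};k,\mathcal{F},\mathcal{R}_S,\mathcal{R}_U)=0$; (C2) $I(Q_{1:N}^{[k,\mathcal{R}_U]};W_{1:K},\mathcal{R}_S\setminus\mathcal{R}_U)=0$; (C3) $H(Q_{1:N}^{[k,\mathcal{R}_U]}\mid\mathcal{F})=0$; (C4) $H(A_n^{[k,\mathcal{R}_U]}\mid Q_n^{[k,\mathcal{R}_U]},W_{1:K},\mathcal{R}_S)=0$;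 (C5) $H(W_k\mid\mathcal{F},A_{1:N}^{[k,\mathcal{R}_U]},\mathcal{R}_U)=0$; (C6) user privacy: for all $k,k',n,\mathcal{R}_U$ there is $\mathcal{R}_U'$ with $H(\mathcal{R}_U')=H(\mathcal{R}_U)$ and $(Q_n^{[k,\mathcal{R}_U]},A_n^{[k,\mathcal{R}_U]},W_{1:K},\mathcal{R}_S)\sim(Q_n^{[k',\mathcal{R}_U']},A_n^{[k',\mathcal{R}_U']},W_{1:K},\mathcal{R}_S)$; (C7) $I(W_{\bar k};\mathcal{F},A_{1:N}^{[k,\mathcal{R}_U]},\mathcal{R}_U)=0$; (C8) $I(\mathcal{R}_S\setminus\mathcal{R}_U;\mathcal{F},A_{1:N}^{[k,\mathcal{R}_U]},W_k,\mathcal{R}_U)=0$. $\rho_S=H(\mathcal{R}_S)/L$, $\rho_U=H(\mathcal{R}_U)/L$. *)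

theory Defs
  imports "HOL-Probability.Probability"
begin

text \<open>These are exactly the library abbreviations \<H>(X), \<H>(X|Y), \<I>(X;Y) of
  HOL-Probability.Information (discrete versions, counting measure on the range).\<close>

definition Ent :: "'a measure \<Rightarrow> real \<Rightarrow> ('a \<Rightarrow> 'b) \<Rightarrow> real" where
  "Ent M b X = prob_space.entropy M b (count_space (X ` space M)) X"

definition CEnt :: "'a measure \<Rightarrow> real \<Rightarrow> ('a \<Rightarrow> 'b) \<Rightarrow> ('a \<Rightarrow> 'c) \<Rightarrow> real" where
  "CEnt M b X Y = prob_space.conditional_entropy M b
      (count_space (X ` space M)) (count_space (Y ` space M)) X Y"

definition MI :: "'a measure \<Rightarrow> real \<Rightarrow> ('a \<Rightarrow> 'b) \<Rightarrow> ('a \<Rightarrow> 'c) \<Rightarrow> real" where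
  "MI M b X Y = prob_space.mutual_information M b
      (count_space (X ` space M)) (count_space (Y ` space M)) X Y"

definition same_law :: "'a measure \<Rightarrow> ('a \<Rightarrow> 'b) \<Rightarrow> ('a \<Rightarrow> 'b) \<Rightarrow> bool" where
  "same_law M X Y \<longleftrightarrow> (\<forall>x. measure M (X -` {x} \<inter> space M) = measure M (Y -` {x} \<inter> space M))"

definition tup :: "'i set \<Rightarrow> ('i \<Rightarrow> 'a \<Rightarrow> 'b) \<Rightarrow> 'a \<Rightarrow> ('i \<Rightarrow> 'b)" where
  "tup I X = (\<lambda>\<omega>. restrict (\<lambda>i. X i \<omega>) I)"

definition RU :: "('a \<Rightarrow> 'c \<Rightarrow> 'r) \<Rightarrow> 'c set \<Rightarrow> 'a \<Rightarrow> ('c \<Rightarrow> 'r)" where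
  "RU RS S = (\<lambda>\<omega>. restrict (RS \<omega>) S)"

definition RSminusRU :: "('a \<Rightarrow> 'c \<Rightarrow> 'r) \<Rightarrow> 'c set \<Rightarrow> 'a \<Rightarrow> ('c \<Rightarrow> 'r)" where
  "RSminusRU RS S = (\<lambda>\<omega>. restrict (RS \<omega>) (- S))"

definition msg_space :: "nat \<Rightarrow> nat \<Rightarrow> (nat \<Rightarrow> nat \<Rightarrow> 'f) set" where
  "msg_space K L = PiE {1..K} (\<lambda>_. PiE {0..<L} (\<lambda>_. UNIV))"

text \<open>
  Parameters: probability space M; N databases (indices 1..N); K messages (1..K),
  each of length L over the finite field 'f (q = CARD('f), entropies in base q);
  W j = message j; RS = server-side common randomness with components indexed by 'c;
  the user holds the components in a subset S of cardinality m (admissible S: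
  card S = m); F = user's strategy randomness;
  Q n k S, A n k S = query to / answer of database n when retrieving W_k
  while holding R_U = RU RS S.
\<close>
definition valid_scheme ::
  "'a measure \<Rightarrow> nat \<Rightarrow> nat \<Rightarrow> nat \<Rightarrow> nat \<Rightarrow>
   (nat \<Rightarrow> 'a \<Rightarrow> (nat \<Rightarrow> 'f::{finite,field})) \<Rightarrow> ('a \<Rightarrow> ('c::finite \<Rightarrow> 'r)) \<Rightarrow>
   ('a \<Rightarrow> 'g) \<Rightarrow> (nat \<Rightarrow> nat \<Rightarrow> 'c set \<Rightarrow> 'a \<Rightarrow> 'q) \<Rightarrow>
   (nat \<Rightarrow> nat \<Rightarrow> 'c set \<Rightarrow> 'a \<Rightarrow> 'ans) \<Rightarrow> bool" where
  "valid_scheme M N K L m W RS F Q A \<longleftrightarrow>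
    (let b = real CARD('f);
         Adm = {S. card S = m};
         WW = tup {1..K} W in
    prob_space M \<and>
    \<comment> \<open>all random variables are discrete (finite range)\<close>
    (\<forall>j\<in>{1..K}. simple_function M (W j)) \<and> simple_function M RS \<and> simple_function M F \<and>
    (\<forall>n\<in>{1..N}. \<forall>k\<in>{1..K}. \<forall>S\<in>Adm. simple_function M (Q n k S) \<and> simple_function M (A n k S)) \<and>
    \<comment> \<open>messages: K L i.i.d. uniform symbols of 'f\<close>
    (\<forall>\<omega>\<in>space M. WW \<omega> \<in> msg_space K L) \<and>
    (\<forall>w\<in>msg_space K L. measure M (WW -` {w} \<inter> space M) = 1 / real (card (msg_space K L :: (nat \<Rightarrow> nat \<Rightarrow> 'f) set))) \<and>
    \<comment> \<open>H(R_S minus R_U) = H(R_S) - H(R_U)\<close>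
    (\<forall>S\<in>Adm. Ent M b (RSminusRU RS S) = Ent M b RS - Ent M b (RU RS S)) \<and>
    \<comment> \<open>(C1)\<close>
    (\<forall>S\<in>Adm. MI M b WW (\<lambda>\<omega>. (F \<omega>, RS \<omega>, RU RS S \<omega>)) = 0) \<and>
    \<comment> \<open>(C2)\<close>
    (\<forall>k\<in>{1..K}. \<forall>S\<in>Adm.
       MI M b (tup {1..N} (\<lambda>n. Q n k S)) (\<lambda>\<omega>. (WW \<omega>, RSminusRU RS S \<omega>)) = 0) \<and>
    \<comment> \<open>(C3)\<close>
    (\<forall>k\<in>{1..K}. \<forall>S\<in>Adm. CEnt M b (tup {1..N} (\<lambda>n. Q n k S)) F = 0) \<and>
    \<comment> \<open>(C4)\<close>
    (\<forall>k\<in>{1..K}. \<forall>n\<in>{1..N}. \<forall>S\<in>Adm.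
       CEnt M b (A n k S) (\<lambda>\<omega>. (Q n k S \<omega>, WW \<omega>, RS \<omega>)) = 0) \<and>
    \<comment> \<open>(C5) correctness\<close>
    (\<forall>k\<in>{1..K}. \<forall>S\<in>Adm.
       CEnt M b (W k) (\<lambda>\<omega>. (F \<omega>, tup {1..N} (\<lambda>n. A n k S) \<omega>, RU RS S \<omega>)) = 0) \<and>
    \<comment> \<open>(C6) user privacy\<close>
    (\<forall>k\<in>{1..K}. \<forall>k'\<in>{1..K}. \<forall>n\<in>{1..N}. \<forall>S\<in>Adm. \<exists>S'\<in>Adm.
       Ent M b (RU RS S') = Ent M b (RU RS S) \<and>
       same_law M (\<lambda>\<omega>. (Q n k S \<omega>, A n k S \<omega>, WW \<omega>, RS \<omega>))
                  (\<lambda>\<omega>. (Q n k' S' \<omega>, A n k' S' \<omega>, WW \<omega>, RS \<omega>))) \<and>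
    \<comment> \<open>(C7) database privacy\<close>
    (\<forall>k\<in>{1..K}. \<forall>S\<in>Adm.
       MI M b (tup ({1..K} - {k}) W) (\<lambda>\<omega>. (F \<omega>, tup {1..N} (\<lambda>n. A n k S) \<omega>, RU RS S \<omega>)) = 0) \<and>
    \<comment> \<open>(C8)\<close>
    (\<forall>k\<in>{1..K}. \<forall>S\<in>Adm.
       MI M b (RSminusRU RS S) (\<lambda>\<omega>. (F \<omega>, tup {1..N} (\<lambda>n. A n k S) \<omega>, W k \<omega>, RU RS S \<omega>)) = 0))"

end

theory Submission
  imports Defs
begin

(* All quantities are Shannon entropies of discrete random variables, and "Y is determined
   by C" is encoded as H(Y, C) = H(C), which is what the vanishing conditional entropies in
   the model give.  Write D_k(T) = H(A^[k]_{1:N} | F, R_S, W_T).  Revealing a further message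
   W_k' to the conditioning costs exactly L (it is decodable and independent of the rest),
   the answers of the N databases are subadditive, and by user privacy each single answer
   looks the same whatever message is retrieved; so D_k'(T) = L + D_k'(T + k') splits into N
   terms each bounded by some D_k(T), giving D_k(T) >= (L + D_k'(T + k')) / N for some
   admissible user randomness.  Iterating from T = {1..K} down to T = {1} gives
   D_1({1}) >= L (1/N + ... + 1/N^(K-1)); finally D_1({1}) <= H(R_S \ R_U) because the
   answers are a function of R_S \ R_U, the messages other than W_1, and data the user
   knows, while the other messages stay independent of everything the user sees. *)

lemma simple_function_tup:
  assumes fin: "finite I" and sf: "\<And>i. i \<in> I \<Longrightarrow> simple_function M (X i)"
  shows "simple_function M (tup I X)"
  unfolding simple_function_def
proof
  have "tup I X ` space M \<subseteq> PiE I (\<lambda>i. X i ` space M)"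
    by (auto simp: tup_def)
  moreover have "finite (PiE I (\<lambda>i. X i ` space M))"
    using fin sf by (intro finite_PiE) (auto simp: simple_functionD)
  ultimately show "finite (tup I X ` space M)" by (rule finite_subset)
next
  show "\<forall>x\<in>tup I X ` space M. tup I X -` {x} \<inter> space M \<in> sets M"
  proof
    fix v assume "v \<in> tup I X ` space M"
    then obtain \<omega>0 where v: "v = tup I X \<omega>0" by auto
    have "tup I X -` {v} \<inter> space M = {\<omega>\<in>space M. \<forall>i\<in>I. X i \<omega> = v i}"
      by (auto simp: v tup_def restrict_def fun_eq_iff) metis
    also have "\<dots> \<in> sets M"
    proof (rule sets.sets_Collect_finite_All[OF _ fin])
      fix i assume i: "i \<in> I"
      have "{\<omega>\<in>space M. X i \<omega> = v i} = X i -` {v i} \<inter> space M" by auto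
      also have "\<dots> \<in> sets M"
      proof (cases "v i \<in> X i ` space M")
        case True then show ?thesis using simple_functionD(2)[OF sf[OF i]] by blast
      next
        case False then have "X i -` {v i} \<inter> space M = {}" by (auto simp: image_iff)
        then show ?thesis by simp
      qed
      finally show "{\<omega>\<in>space M. X i \<omega> = v i} \<in> sets M" .
    qed
    finally show "tup I X -` {v} \<inter> space M \<in> sets M" .
  qed
qed

context information_space
begin

abbreviation prob_val :: "('a \<Rightarrow> 'x) \<Rightarrow> 'x \<Rightarrow> real" where
  "prob_val X x \<equiv> prob (X -` {x} \<inter> space M)"

lemma entropy_simple_eq:
  assumes "simple_function M X"
  shows "\<H>(X) = - (\<Sum>x\<in>X`space M. prob_val X x * log b (prob_val X x))"
  by (rule entropy_simple_distributed[OF simple_distributedI[OF assms measure_nonneg refl]])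

lemma prob_val_comp:
  assumes X: "simple_function M X"
  shows "prob_val (\<lambda>\<omega>. g (X \<omega>)) s = (\<Sum>t\<in>{t\<in>X`space M. g t = s}. prob_val X t)"
proof -
  have "(\<lambda>\<omega>. g (X \<omega>)) -` {s} \<inter> space M = (\<Union>t\<in>{t\<in>X`space M. g t = s}. X -` {t} \<inter> space M)"
    by auto
  moreover have "prob (\<Union>t\<in>{t\<in>X`space M. g t = s}. X -` {t} \<inter> space M)
      = (\<Sum>t\<in>{t\<in>X`space M. g t = s}. prob_val X t)"
    by (rule finite_measure_finite_Union) (use simple_functionD[OF X] in \<open>auto simp: disjoint_family_on_def\<close>)
  ultimately show ?thesis by simp
qed

lemma sum_prob_val_comp:
  assumes X: "simple_function M X"
  shows "(\<Sum>t\<in>X`space M. prob_val X t * h (g t))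
       = (\<Sum>s\<in>(\<lambda>\<omega>. g (X \<omega>))`space M. prob_val (\<lambda>\<omega>. g (X \<omega>)) s * h s)"
proof -
  have fin: "finite (X`space M)" using simple_functionD[OF X] by simp
  have "(\<Sum>t\<in>X`space M. prob_val X t * h (g t))
      = (\<Sum>s\<in>g`X`space M. \<Sum>t\<in>{t\<in>X`space M. g t = s}. prob_val X t * h (g t))"
    by (rule sum.image_gen[OF fin])
  also have "\<dots> = (\<Sum>s\<in>g`X`space M. (\<Sum>t\<in>{t\<in>X`space M. g t = s}. prob_val X t) * h s)"
    by (auto simp: sum_distrib_right intro!: sum.cong)
  also have "\<dots> = (\<Sum>s\<in>(\<lambda>\<omega>. g (X \<omega>))`space M. prob_val (\<lambda>\<omega>. g (X \<omega>)) s * h s)"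
    by (simp add: prob_val_comp[OF X] image_image)
  finally show ?thesis .
qed

lemma entropy_comp_eq:
  assumes "simple_function M X"
  shows "\<H>(\<lambda>\<omega>. g (X \<omega>))
       = - (\<Sum>t\<in>X`space M. prob_val X t * log b (prob_val (\<lambda>\<omega>. g (X \<omega>)) (g t)))"
  using entropy_simple_eq[of "\<lambda>\<omega>. g (X \<omega>)"]
    sum_prob_val_comp[OF assms, of "\<lambda>s. log b (prob_val (\<lambda>\<omega>. g (X \<omega>)) s)" g]
  by (simp add: simple_function_compose1[OF assms])

lemma entropy_cong:
  assumes "simple_function M X" "\<And>\<omega>. \<omega> \<in> space M \<Longrightarrow> X \<omega> = X' \<omega>"
  shows "\<H>(X) = \<H>(X')"
proof -
  have sf: "simple_function M X'" using assms simple_function_cong by blast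
  have im: "X`space M = X'`space M" using assms(2) by (auto simp: image_def)
  have "\<And>x. X -` {x} \<inter> space M = X' -` {x} \<inter> space M" using assms(2) by auto
  then show ?thesis using entropy_simple_eq[OF assms(1)] entropy_simple_eq[OF sf] im by simp
qed

lemma entropy_le_of_fun:
  assumes Y: "simple_function M Y" and f: "\<And>\<omega>. \<omega> \<in> space M \<Longrightarrow> X \<omega> = f (Y \<omega>)"
  shows "\<H>(X) \<le> \<H>(Y)"
proof -
  have "\<H>(f \<circ> Y) = \<H>(X)" by (rule entropy_cong) (use Y f in auto)
  then show ?thesis using entropy_data_processing[OF Y, of f] by simp
qed

lemma entropy_eq_of_funs:
  assumes X: "simple_function M X" and Y: "simple_function M Y"
    and f: "\<And>\<omega>. \<omega> \<in> space M \<Longrightarrow> X \<omega> = f (Y \<omega>)"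
    and g: "\<And>\<omega>. \<omega> \<in> space M \<Longrightarrow> Y \<omega> = g (X \<omega>)"
  shows "\<H>(X) = \<H>(Y)"
  using entropy_le_of_fun[of Y X f] entropy_le_of_fun[of X Y g] X Y f g by fastforce

lemma entropy_swap:
  assumes "simple_function M X" "simple_function M Y"
  shows "\<H>(\<lambda>\<omega>. (X \<omega>, Y \<omega>)) = \<H>(\<lambda>\<omega>. (Y \<omega>, X \<omega>))"
  by (rule entropy_eq_of_funs[where f="\<lambda>(a,b). (b,a)" and g="\<lambda>(a,b). (b,a)"]) (use assms in auto)

lemma entropy_le_Pair_left:
  assumes "simple_function M X" "simple_function M Y"
  shows "\<H>(X) \<le> \<H>(\<lambda>\<omega>. (X \<omega>, Y \<omega>))"
  by (rule entropy_le_of_fun[where f=fst]) (use assms in auto)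

lemma entropy_le_Pair_right:
  assumes "simple_function M X" "simple_function M Y"
  shows "\<H>(Y) \<le> \<H>(\<lambda>\<omega>. (X \<omega>, Y \<omega>))"
  by (rule entropy_le_of_fun[where f=snd]) (use assms in auto)

lemma entropy_Pair_le_add:
  assumes X: "simple_function M X" and Y: "simple_function M Y"
  shows "\<H>(\<lambda>\<omega>. (X \<omega>, Y \<omega>)) \<le> \<H>(X) + \<H>(Y)"
  using entropy_chain_rule[OF X Y] conditional_entropy_less_eq_entropy[OF Y X] by simp

lemma cond_entropy_eq_diff:
  assumes X: "simple_function M X" and Y: "simple_function M Y"
  shows "\<H>(X | Y) = \<H>(\<lambda>\<omega>. (Y \<omega>, X \<omega>)) - \<H>(Y)"
  using entropy_chain_rule[OF Y X] by simp

lemma mutual_information_eq_entropy: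
  assumes X: "simple_function M X" and Y: "simple_function M Y"
  shows "\<I>(X ; Y) = \<H>(X) + \<H>(Y) - \<H>(\<lambda>\<omega>. (Y \<omega>, X \<omega>))"
  using mutual_information_eq_entropy_conditional_entropy[OF X Y] cond_entropy_eq_diff[OF X Y]
  by simp

lemma entropy_submodular:
  fixes X :: "'a \<Rightarrow> 'x" and Y :: "'a \<Rightarrow> 'y" and Z :: "'a \<Rightarrow> 'z"
  assumes X: "simple_function M X" and Y: "simple_function M Y" and Z: "simple_function M Z"
  shows "\<H>(\<lambda>\<omega>. (X \<omega>, Y \<omega>, Z \<omega>)) + \<H>(Z) \<le> \<H>(\<lambda>\<omega>. (X \<omega>, Z \<omega>)) + \<H>(\<lambda>\<omega>. (Y \<omega>, Z \<omega>))"
proof -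
  let ?XYZ = "\<lambda>\<omega>. (X \<omega>, Y \<omega>, Z \<omega>)" and ?XZ = "\<lambda>\<omega>. (X \<omega>, Z \<omega>)" and ?YZ = "\<lambda>\<omega>. (Y \<omega>, Z \<omega>)"
  define p where "p = prob_val ?XYZ"
  define p13 where "p13 = (\<lambda>t :: 'x \<times> 'y \<times> 'z. prob_val ?XZ (fst t, snd (snd t)))"
  define p23 where "p23 = (\<lambda>t :: 'x \<times> 'y \<times> 'z. prob_val ?YZ (fst (snd t), snd (snd t)))"
  define p3 where "p3 = (\<lambda>t :: 'x \<times> 'y \<times> 'z. prob_val Z (snd (snd t)))"
  have sXYZ: "simple_function M ?XYZ" using X Y Z by simp
  have sXZ: "simple_function M ?XZ" using X Z by simp
  have sYZ: "simple_function M ?YZ" using Y Z by simp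
  have "\<I>(X ; Y | Z) = (\<Sum>(x, y, z)\<in>?XYZ`space M.
      p (x, y, z) * log b (p (x, y, z) / (prob_val ?XZ (x, z) * (prob_val ?YZ (y, z) / prob_val Z z))))"
    unfolding p_def
    by (rule conditional_mutual_information_eq)
       (rule simple_distributedI, (simp_all add: X Y Z measure_nonneg))+
  also have "\<dots> = (\<Sum>t\<in>?XYZ`space M. p t * log b (p t / (p13 t * (p23 t / p3 t))))"
    by (intro sum.cong refl) (auto simp: split_beta p13_def p23_def p3_def)
  also have "\<dots> = (\<Sum>t\<in>?XYZ`space M.
      p t * log b (p t) - p t * log b (p13 t) - p t * log b (p23 t) + p t * log b (p3 t))"
  proof (intro sum.cong refl)
    fix t :: "'x \<times> 'y \<times> 'z"
    show "p t * log b (p t / (p13 t * (p23 t / p3 t)))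
        = p t * log b (p t) - p t * log b (p13 t) - p t * log b (p23 t) + p t * log b (p3 t)"
    proof (cases "p t = 0")
      case False
      then have pos: "0 < p t" unfolding p_def using measure_nonneg[of M] by (simp add: order_less_le)
      obtain x y z where t: "t = (x, y, z)" by (cases t) auto
      have "p t \<le> p13 t" "p t \<le> p23 t" "p t \<le> p3 t"
        unfolding p_def p13_def p23_def p3_def
        by (rule finite_measure_mono; use sXZ sYZ Z in \<open>auto simp: t simple_functionD\<close>)+
      with pos b_gt_1 show ?thesis by (simp add: log_divide log_mult algebra_simps)
    qed simp
  qed
  also have "\<dots> = - \<H>(?XYZ) + \<H>(?XZ) + \<H>(?YZ) - \<H>(Z)"
  proof -
    have "(\<Sum>t\<in>?XYZ`space M. p t * log b (p13 t)) = - \<H>(?XZ)"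
      using sum_prob_val_comp[OF sXYZ, of "\<lambda>s. log b (prob_val ?XZ s)" "\<lambda>t. (fst t, snd (snd t))"]
        entropy_simple_eq[OF sXZ]
      by (simp add: p_def p13_def)
    moreover have "(\<Sum>t\<in>?XYZ`space M. p t * log b (p23 t)) = - \<H>(?YZ)"
      using sum_prob_val_comp[OF sXYZ, of "\<lambda>s. log b (prob_val ?YZ s)" "\<lambda>t. (fst (snd t), snd (snd t))"]
        entropy_simple_eq[OF sYZ]
      by (simp add: p_def p23_def)
    moreover have "(\<Sum>t\<in>?XYZ`space M. p t * log b (p3 t)) = - \<H>(Z)"
      using sum_prob_val_comp[OF sXYZ, of "\<lambda>s. log b (prob_val Z s)" "\<lambda>t. snd (snd t)"]
        entropy_simple_eq[OF Z]
      by (simp add: p_def p3_def)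
    ultimately show ?thesis
      using entropy_simple_eq[OF sXYZ] by (simp add: sum.distrib sum_subtractf p_def)
  qed
  finally show ?thesis using conditional_mutual_information_nonneg[OF X Y Z] by simp
qed


lemma sum_prob_val_eq_of_same_law:
  assumes X: "simple_function M X" and Y: "simple_function M Y" and law: "same_law M X Y"
  shows "(\<Sum>t\<in>X`space M. prob_val X t * \<phi> t) = (\<Sum>t\<in>Y`space M. prob_val Y t * \<phi> t)"
proof -
  let ?U = "X`space M \<union> Y`space M"
  have fin: "finite ?U" using simple_functionD(1)[OF X] simple_functionD(1)[OF Y] by simp
  have outside: "t \<notin> Z`space M \<Longrightarrow> prob_val Z t = 0" for Z :: "'a \<Rightarrow> 'b" and t
    by (subgoal_tac "Z -` {t} \<inter> space M = {}") auto
  have "(\<Sum>t\<in>X`space M. prob_val X t * \<phi> t) = (\<Sum>t\<in>?U. prob_val X t * \<phi> t)"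
    by (rule sum.mono_neutral_left[OF fin]) (auto simp: outside)
  also have "\<dots> = (\<Sum>t\<in>?U. prob_val Y t * \<phi> t)"
    using law by (simp add: same_law_def)
  also have "\<dots> = (\<Sum>t\<in>Y`space M. prob_val Y t * \<phi> t)"
    by (rule sum.mono_neutral_right[OF fin]) (auto simp: outside)
  finally show ?thesis .
qed

lemma prob_val_comp_eq_sum:
  assumes X: "simple_function M X"
  shows "prob_val (\<lambda>\<omega>. g (X \<omega>)) s = (\<Sum>t\<in>X`space M. prob_val X t * (if g t = s then 1 else 0))"
  unfolding prob_val_comp[OF X]
  using simple_functionD(1)[OF X]
  by (simp add: sum.inter_filter[symmetric] mult.commute if_distrib[of "\<lambda>x. x * _"] cong: if_cong)

lemma entropy_comp_eq_of_same_law: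
  assumes X: "simple_function M X" and Y: "simple_function M Y" and law: "same_law M X Y"
  shows "\<H>(\<lambda>\<omega>. g (X \<omega>)) = \<H>(\<lambda>\<omega>. g (Y \<omega>))"
proof -
  have "prob_val (\<lambda>\<omega>. g (X \<omega>)) s = prob_val (\<lambda>\<omega>. g (Y \<omega>)) s" for s
    unfolding prob_val_comp_eq_sum[OF X] prob_val_comp_eq_sum[OF Y]
    by (rule sum_prob_val_eq_of_same_law[OF X Y law])
  then show ?thesis
    unfolding entropy_comp_eq[OF X] entropy_comp_eq[OF Y]
    using sum_prob_val_eq_of_same_law[OF X Y law] by simp
qed

definition determined_by :: "('a \<Rightarrow> 'x) \<Rightarrow> ('a \<Rightarrow> 'y) \<Rightarrow> bool" where
  "determined_by X Y \<longleftrightarrow> \<H>(\<lambda>\<omega>. (X \<omega>, Y \<omega>)) = \<H>(Y)"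

lemma determined_by_cond_entropy:
  assumes X: "simple_function M X" and Y: "simple_function M Y" and "\<H>(X | Y) = 0"
  shows "determined_by X Y"
  using assms cond_entropy_eq_diff[OF X Y] entropy_swap[OF X Y] unfolding determined_by_def by simp

lemma determined_by_fun:
  assumes X: "simple_function M X" and Y: "simple_function M Y"
    and f: "\<And>\<omega>. \<omega> \<in> space M \<Longrightarrow> X \<omega> = f (Y \<omega>)"
  shows "determined_by X Y"
  unfolding determined_by_def
  by (rule entropy_eq_of_funs[where g=snd and f="\<lambda>y. (f y, y)"]) (use X Y f in auto)

lemma determined_by_refl: "simple_function M X \<Longrightarrow> determined_by X X"
  by (rule determined_by_fun[where f=id]) auto

lemma entropy_le_of_determined:
  assumes X: "simple_function M X" and Y: "simple_function M Y" and "determined_by X Y"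
  shows "\<H>(X) \<le> \<H>(Y)"
  using entropy_le_Pair_left[OF X Y] assms(3) unfolding determined_by_def by simp

lemma entropy_eq_of_determined:
  assumes X: "simple_function M X" and Y: "simple_function M Y" and "determined_by X Y"
    and g: "\<And>\<omega>. \<omega> \<in> space M \<Longrightarrow> Y \<omega> = g (X \<omega>)"
  shows "\<H>(X) = \<H>(Y)"
  using entropy_le_of_determined[OF assms(1-3)] entropy_le_of_fun[of X Y g] X g by fastforce

lemma determined_by_finer:
  assumes X: "simple_function M X" and Y: "simple_function M Y" and C: "simple_function M C"
    and "determined_by X Y" and f: "\<And>\<omega>. \<omega> \<in> space M \<Longrightarrow> Y \<omega> = f (C \<omega>)"
  shows "determined_by X C"
proof -
  have "\<H>(\<lambda>\<omega>. (X \<omega>, C \<omega>, Y \<omega>)) + \<H>(Y) \<le> \<H>(\<lambda>\<omega>. (X \<omega>, Y \<omega>)) + \<H>(\<lambda>\<omega>. (C \<omega>, Y \<omega>))"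
    by (rule entropy_submodular[OF X C Y])
  moreover have "\<H>(\<lambda>\<omega>. (C \<omega>, Y \<omega>)) = \<H>(C)"
    by (rule entropy_eq_of_funs[where g=fst and f="\<lambda>c. (c, f c)"]) (use C Y f in auto)
  moreover have "\<H>(\<lambda>\<omega>. (X \<omega>, C \<omega>, Y \<omega>)) = \<H>(\<lambda>\<omega>. (X \<omega>, C \<omega>))"
    by (rule entropy_eq_of_funs[where f="\<lambda>(x,c). (x,c,f c)" and g="\<lambda>(x,c,y). (x,c)"])
       (use X C Y f in auto)
  ultimately have "\<H>(\<lambda>\<omega>. (X \<omega>, C \<omega>)) \<le> \<H>(C)"
    using \<open>determined_by X Y\<close> unfolding determined_by_def by simp
  with entropy_le_Pair_right[OF X C] show ?thesis unfolding determined_by_def by simp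
qed

lemma determined_by_trans:
  assumes X: "simple_function M X" and Y: "simple_function M Y" and Z: "simple_function M Z"
    and XY: "determined_by X Y" and YZ: "determined_by Y Z"
  shows "determined_by X Z"
proof -
  have "determined_by X (\<lambda>\<omega>. (Y \<omega>, Z \<omega>))"
    by (rule determined_by_finer[OF X Y _ XY, where f=fst]) (use Y Z in auto)
  then have XYZ: "\<H>(\<lambda>\<omega>. (X \<omega>, Y \<omega>, Z \<omega>)) = \<H>(Z)"
    using YZ unfolding determined_by_def by simp
  have "\<H>(\<lambda>\<omega>. (X \<omega>, Z \<omega>)) \<le> \<H>(\<lambda>\<omega>. (X \<omega>, Y \<omega>, Z \<omega>))"
    by (rule entropy_le_of_fun[where f="\<lambda>(x,y,z). (x,z)"]) (use X Y Z in auto)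
  with XYZ entropy_le_Pair_right[OF X Z] show ?thesis unfolding determined_by_def by simp
qed

lemma determined_by_Pair:
  assumes X: "simple_function M X" and Y: "simple_function M Y" and C: "simple_function M C"
    and XC: "determined_by X C" and YC: "determined_by Y C"
  shows "determined_by (\<lambda>\<omega>. (X \<omega>, Y \<omega>)) C"
proof -
  have "\<H>(\<lambda>\<omega>. (X \<omega>, Y \<omega>, C \<omega>)) + \<H>(C) \<le> \<H>(\<lambda>\<omega>. (X \<omega>, C \<omega>)) + \<H>(\<lambda>\<omega>. (Y \<omega>, C \<omega>))"
    by (rule entropy_submodular[OF X Y C])
  moreover have "\<H>(\<lambda>\<omega>. (X \<omega>, Y \<omega>, C \<omega>)) = \<H>(\<lambda>\<omega>. ((X \<omega>, Y \<omega>), C \<omega>))"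
    by (rule entropy_eq_of_funs[where f="\<lambda>((x,y),c). (x,y,c)" and g="\<lambda>(x,y,c). ((x,y),c)"])
       (use X Y C in auto)
  ultimately have "\<H>(\<lambda>\<omega>. ((X \<omega>, Y \<omega>), C \<omega>)) \<le> \<H>(C)"
    using XC YC unfolding determined_by_def by simp
  moreover have "\<H>(C) \<le> \<H>(\<lambda>\<omega>. ((X \<omega>, Y \<omega>), C \<omega>))"
    by (rule entropy_le_Pair_right) (use X Y C in auto)
  ultimately show ?thesis unfolding determined_by_def by simp
qed

lemma determined_by_fun_Pair:
  assumes X: "simple_function M X" and Y: "simple_function M Y" and C: "simple_function M C"
    and YC: "determined_by Y C" and f: "\<And>\<omega>. \<omega> \<in> space M \<Longrightarrow> X \<omega> = f (Y \<omega>, C \<omega>)"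
  shows "determined_by X C"
proof -
  have YC_C: "determined_by (\<lambda>\<omega>. (Y \<omega>, C \<omega>)) C"
    by (rule determined_by_Pair[OF Y C C YC determined_by_refl[OF C]])
  have X_YC: "determined_by X (\<lambda>\<omega>. (Y \<omega>, C \<omega>))"
    by (rule determined_by_fun[where f=f]) (use X Y C f in auto)
  show ?thesis by (rule determined_by_trans[OF X _ C X_YC YC_C]) (use Y C in simp)
qed

lemma cond_entropy_le_finer:
  assumes X: "simple_function M X" and C: "simple_function M C" and C': "simple_function M C'"
    and C'C: "determined_by C' C"
  shows "\<H>(\<lambda>\<omega>. (X \<omega>, C \<omega>)) - \<H>(C) \<le> \<H>(\<lambda>\<omega>. (X \<omega>, C' \<omega>)) - \<H>(C')"
proof -
  have "\<H>(\<lambda>\<omega>. (X \<omega>, C \<omega>, C' \<omega>)) + \<H>(C') \<le> \<H>(\<lambda>\<omega>. (X \<omega>, C' \<omega>)) + \<H>(\<lambda>\<omega>. (C \<omega>, C' \<omega>))"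
    by (rule entropy_submodular[OF X C C'])
  moreover have "\<H>(\<lambda>\<omega>. (X \<omega>, C \<omega>, C' \<omega>)) = \<H>(\<lambda>\<omega>. (X \<omega>, C \<omega>))"
  proof (rule entropy_eq_of_determined[where g="\<lambda>(x,c,c'). (x,c)"])
    have C'XC: "determined_by C' (\<lambda>\<omega>. (X \<omega>, C \<omega>))"
      by (rule determined_by_finer[OF C' C _ C'C, where f=snd]) (use X C in auto)
    show "determined_by (\<lambda>\<omega>. (X \<omega>, C \<omega>, C' \<omega>)) (\<lambda>\<omega>. (X \<omega>, C \<omega>))"
      by (rule determined_by_fun_Pair[OF _ C' _ C'XC, where f="\<lambda>(c',x,c). (x,c,c')"])
         (use X C C' in auto)
  qed (use X C C' in auto)
  moreover have "\<H>(\<lambda>\<omega>. (C \<omega>, C' \<omega>)) = \<H>(C)"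
    using C'C entropy_swap[OF C' C] unfolding determined_by_def by simp
  ultimately show ?thesis by simp
qed

lemma determined_by_tup:
  assumes "finite I" and "\<And>i. i \<in> I \<Longrightarrow> simple_function M (X i)"
    and C: "simple_function M C" and "\<And>i. i \<in> I \<Longrightarrow> determined_by (X i) C"
  shows "determined_by (tup I X) C"
  using assms(1,2,4)
proof (induction I rule: finite_induct)
  case empty
  show ?case
    by (rule determined_by_fun[where f="\<lambda>_. (\<lambda>_. undefined)"]) (use C in \<open>auto simp: tup_def\<close>)
next
  case (insert i I)
  have sI: "simple_function M (tup I X)" by (rule simple_function_tup) (use insert in auto)
  have sI': "simple_function M (tup (insert i I) X)" by (rule simple_function_tup) (use insert in auto)
  have si: "simple_function M (X i)" using insert by auto
  show ?case
  proof (rule determined_by_fun_Pair[OF _ _ C, where f="\<lambda>((a,t),c). t(i := a)"])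
    show "determined_by (\<lambda>\<omega>. (X i \<omega>, tup I X \<omega>)) C"
      by (rule determined_by_Pair[OF si sI C]) (use insert in auto)
  qed (use si sI sI' in \<open>auto simp: tup_def restrict_def fun_eq_iff\<close>)
qed

lemma cond_entropy_tup_le_sum:
  assumes "finite I" and "\<And>i. i \<in> I \<Longrightarrow> simple_function M (X i)"
    and C: "simple_function M C"
  shows "\<H>(\<lambda>\<omega>. (tup I X \<omega>, C \<omega>)) - \<H>(C) \<le> (\<Sum>i\<in>I. \<H>(\<lambda>\<omega>. (X i \<omega>, C \<omega>)) - \<H>(C))"
  using assms(1,2)
proof (induction I rule: finite_induct)
  case empty
  have "determined_by (tup {} X) C" by (rule determined_by_tup) (use C in auto)
  then show ?case unfolding determined_by_def by simp
next
  case (insert i I)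
  have sI: "simple_function M (tup I X)" by (rule simple_function_tup) (use insert in auto)
  have sI': "simple_function M (tup (insert i I) X)" by (rule simple_function_tup) (use insert in auto)
  have si: "simple_function M (X i)" using insert by auto
  have "\<H>(\<lambda>\<omega>. (tup (insert i I) X \<omega>, C \<omega>)) = \<H>(\<lambda>\<omega>. (X i \<omega>, tup I X \<omega>, C \<omega>))"
    by (rule entropy_eq_of_funs[where f="\<lambda>(a,t,c). (t(i := a), c)" and g="\<lambda>(t,c). (t i, restrict t I, c)"])
       (use si sI sI' C insert.hyps in \<open>auto simp: tup_def restrict_def fun_eq_iff\<close>)
  moreover have "\<H>(\<lambda>\<omega>. (X i \<omega>, tup I X \<omega>, C \<omega>)) + \<H>(C)
      \<le> \<H>(\<lambda>\<omega>. (X i \<omega>, C \<omega>)) + \<H>(\<lambda>\<omega>. (tup I X \<omega>, C \<omega>))"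
    by (rule entropy_submodular[OF si sI C])
  ultimately show ?case using insert by simp
qed

text \<open>Y - Z - A is a Markov chain, since apart from Z the only input of A is X, which is
  independent of Y.\<close>

lemma cond_entropy_le_of_indep:
  assumes X: "simple_function M X" and Y: "simple_function M Y" and Z: "simple_function M Z"
    and A: "simple_function M A"
    and indep: "\<H>(\<lambda>\<omega>. (X \<omega>, Y \<omega>)) = \<H>(X) + \<H>(Y)"
    and ZY: "determined_by Z Y" and AXZ: "determined_by A (\<lambda>\<omega>. (X \<omega>, Z \<omega>))"
  shows "\<H>(\<lambda>\<omega>. (A \<omega>, Z \<omega>)) - \<H>(Z) \<le> \<H>(\<lambda>\<omega>. (A \<omega>, Y \<omega>)) - \<H>(Y)"
proof -
  have XZ: "simple_function M (\<lambda>\<omega>. (X \<omega>, Z \<omega>))" and XY: "simple_function M (\<lambda>\<omega>. (X \<omega>, Y \<omega>))"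
    and AZ: "simple_function M (\<lambda>\<omega>. (A \<omega>, Z \<omega>))" and AY: "simple_function M (\<lambda>\<omega>. (A \<omega>, Y \<omega>))"
    using assms by simp_all
  have ZXY: "determined_by Z (\<lambda>\<omega>. (X \<omega>, Y \<omega>))"
    by (rule determined_by_finer[OF Z Y XY ZY, where f=snd]) simp
  have "determined_by (\<lambda>\<omega>. (X \<omega>, Z \<omega>)) (\<lambda>\<omega>. (X \<omega>, Y \<omega>))"
    by (rule determined_by_fun_Pair[OF XZ Z XY ZXY, where f="\<lambda>(z,(x,y)). (x,z)"]) simp
  then have AXY: "determined_by A (\<lambda>\<omega>. (X \<omega>, Y \<omega>))"
    by (rule determined_by_trans[OF A XZ XY AXZ])
  have "\<H>(\<lambda>\<omega>. (X \<omega>, Y \<omega>, A \<omega>, Z \<omega>)) + \<H>(\<lambda>\<omega>. (A \<omega>, Z \<omega>))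
      \<le> \<H>(\<lambda>\<omega>. (X \<omega>, A \<omega>, Z \<omega>)) + \<H>(\<lambda>\<omega>. (Y \<omega>, A \<omega>, Z \<omega>))"
    by (rule entropy_submodular[OF X Y AZ])
  moreover have "\<H>(\<lambda>\<omega>. (X \<omega>, Y \<omega>, A \<omega>, Z \<omega>)) = \<H>(\<lambda>\<omega>. (X \<omega>, Y \<omega>))"
    by (rule entropy_eq_of_determined[OF _ XY determined_by_fun_Pair[OF _ AZ XY
          determined_by_Pair[OF A Z XY AXY ZXY], where f="\<lambda>(az,(x,y)). (x,y,az)"],
          where g="\<lambda>(x,y,a,z). (x,y)"])
       (use X Y A Z in auto)
  moreover have "\<H>(\<lambda>\<omega>. (X \<omega>, A \<omega>, Z \<omega>)) = \<H>(\<lambda>\<omega>. (X \<omega>, Z \<omega>))"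
    by (rule entropy_eq_of_determined[OF _ XZ determined_by_fun_Pair[OF _ A XZ AXZ,
          where f="\<lambda>(a,(x,z)). (x,a,z)"], where g="\<lambda>(x,a,z). (x,z)"])
       (use X A Z in auto)
  moreover have "\<H>(\<lambda>\<omega>. (Y \<omega>, A \<omega>, Z \<omega>)) = \<H>(\<lambda>\<omega>. (A \<omega>, Y \<omega>))"
    by (rule entropy_eq_of_determined[OF _ AY determined_by_fun_Pair[OF _ Z AY
          determined_by_finer[OF Z Y AY ZY, where f=snd], where f="\<lambda>(z,(a,y)). (y,a,z)"],
          where g="\<lambda>(y,a,z). (a,y)"])
       (use Y A Z in auto)
  moreover have "\<H>(\<lambda>\<omega>. (X \<omega>, Z \<omega>)) \<le> \<H>(X) + \<H>(Z)" by (rule entropy_Pair_le_add[OF X Z])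
  ultimately show ?thesis using indep by simp
qed

text \<open>The one-time-pad bound: if A is a function of X, V and C while X stays independent of
  (A, C), then all the uncertainty of A given C must come from V.\<close>

lemma cond_entropy_le_entropy_key:
  assumes X: "simple_function M X" and V: "simple_function M V" and C: "simple_function M C"
    and A: "simple_function M A"
    and indep: "\<H>(\<lambda>\<omega>. (X \<omega>, A \<omega>, C \<omega>)) = \<H>(X) + \<H>(\<lambda>\<omega>. (A \<omega>, C \<omega>))"
    and AXVC: "determined_by A (\<lambda>\<omega>. (X \<omega>, V \<omega>, C \<omega>))"
  shows "\<H>(\<lambda>\<omega>. (A \<omega>, C \<omega>)) - \<H>(C) \<le> \<H>(V)"
proof -
  have XVC: "simple_function M (\<lambda>\<omega>. (X \<omega>, V \<omega>, C \<omega>))" using X V C by simp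
  have "\<H>(\<lambda>\<omega>. (X \<omega>, A \<omega>, C \<omega>)) \<le> \<H>(\<lambda>\<omega>. (X \<omega>, V \<omega>, C \<omega>))"
    by (rule entropy_le_of_determined[OF _ XVC determined_by_fun_Pair[OF _ A XVC AXVC,
          where f="\<lambda>(a,(x,v,c)). (x,a,c)"]])
       (use X A C in auto)
  also have "\<dots> \<le> \<H>(X) + \<H>(\<lambda>\<omega>. (V \<omega>, C \<omega>))"
    by (rule entropy_Pair_le_add) (use X V C in auto)
  also have "\<dots> \<le> \<H>(X) + \<H>(V) + \<H>(C)"
    using entropy_Pair_le_add[OF V C] by simp
  finally show ?thesis using indep by simp
qed

end


lemma sum_inverse_powers_Suc:
  fixes x :: real
  assumes "x \<noteq> 0"
  shows "(\<Sum>i=1..Suc j. 1 / x ^ i) = (1 + (\<Sum>i=1..j. 1 / x ^ i)) / x"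
proof (induction j)
  case (Suc j)
  have "(\<Sum>i=1..Suc (Suc j). 1 / x ^ i) = (1 + (\<Sum>i=1..j. 1 / x ^ i)) / x + 1 / x ^ Suc (Suc j)"
    using Suc by simp
  also have "\<dots> = (1 + (\<Sum>i=1..Suc j. 1 / x ^ i)) / x"
    using assms by (simp add: field_simps)
  finally show ?case .
qed simp

lemma exists_ge_of_sum_ge:
  fixes f :: "'i \<Rightarrow> real"
  assumes "finite I" "I \<noteq> {}" "real (card I) * c \<le> (\<Sum>i\<in>I. f i)"
  shows "\<exists>i\<in>I. c \<le> f i"
proof (rule ccontr)
  assume "\<not> (\<exists>i\<in>I. c \<le> f i)"
  then have "(\<Sum>i\<in>I. f i) < (\<Sum>i\<in>I. c)"
    using assms(1,2) by (intro sum_strict_mono) auto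
  with assms(3) show False by simp
qed

locale spir_scheme = information_space M b for M :: "'a measure" and b :: real +
  fixes N K L m :: nat and W :: "nat \<Rightarrow> 'a \<Rightarrow> (nat \<Rightarrow> 'f::{finite,field})"
    and RS :: "'a \<Rightarrow> ('c::finite \<Rightarrow> 'r)" and F :: "'a \<Rightarrow> 'g"
    and Q :: "nat \<Rightarrow> nat \<Rightarrow> 'c set \<Rightarrow> 'a \<Rightarrow> 'q"
    and A :: "nat \<Rightarrow> nat \<Rightarrow> 'c set \<Rightarrow> 'a \<Rightarrow> 'ans"
  assumes b_def: "b = real CARD('f)" and N_ge_1: "1 \<le> N"
    and valid: "valid_scheme M N K L m W RS F Q A"
begin

abbreviation "WW \<equiv> tup {1..K} W"
abbreviation "WT T \<equiv> tup T W"
abbreviation "AT k S \<equiv> tup {1..N} (\<lambda>n. A n k S)"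
abbreviation "QT k S \<equiv> tup {1..N} (\<lambda>n. Q n k S)"
abbreviation "U S \<equiv> RU RS S"
abbreviation "V S \<equiv> RSminusRU RS S"

lemmas valid_unfolded = valid[unfolded valid_scheme_def Let_def b_def[symmetric] Ent_def CEnt_def MI_def]

lemma sf_W: "j \<in> {1..K} \<Longrightarrow> simple_function M (W j)" using valid_unfolded by auto
lemma sf_RS: "simple_function M RS" using valid_unfolded by auto
lemma sf_F: "simple_function M F" using valid_unfolded by auto
lemma sf_Q: "n \<in> {1..N} \<Longrightarrow> k \<in> {1..K} \<Longrightarrow> card S = m \<Longrightarrow> simple_function M (Q n k S)"
  using valid_unfolded by auto
lemma sf_A: "n \<in> {1..N} \<Longrightarrow> k \<in> {1..K} \<Longrightarrow> card S = m \<Longrightarrow> simple_function M (A n k S)"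
  using valid_unfolded by auto
lemma messages_in_msg_space: "\<omega> \<in> space M \<Longrightarrow> WW \<omega> \<in> msg_space K L" using valid_unfolded by auto
lemma messages_uniform:
  "w \<in> msg_space K L \<Longrightarrow> prob_val WW w = 1 / real (card (msg_space K L :: (nat \<Rightarrow> nat \<Rightarrow> 'f) set))"
  using valid_unfolded by auto
lemma entropy_V: "card S = m \<Longrightarrow> \<H>(V S) = \<H>(RS) - \<H>(U S)" using valid_unfolded by auto
lemma messages_indep_randomness: "card S = m \<Longrightarrow> \<I>(WW ; \<lambda>\<omega>. (F \<omega>, RS \<omega>, U S \<omega>)) = 0"
  using valid_unfolded by auto
lemma queries_by_strategy: "k \<in> {1..K} \<Longrightarrow> card S = m \<Longrightarrow> \<H>(QT k S | F) = 0"
  using valid_unfolded by auto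
lemma answer_by_query: "k \<in> {1..K} \<Longrightarrow> n \<in> {1..N} \<Longrightarrow> card S = m \<Longrightarrow>
    \<H>(A n k S | \<lambda>\<omega>. (Q n k S \<omega>, WW \<omega>, RS \<omega>)) = 0"
  using valid_unfolded by auto
lemma decodability: "k \<in> {1..K} \<Longrightarrow> card S = m \<Longrightarrow>
    \<H>(W k | \<lambda>\<omega>. (F \<omega>, AT k S \<omega>, U S \<omega>)) = 0"
  using valid_unfolded by auto
lemma user_privacy: "k \<in> {1..K} \<Longrightarrow> k' \<in> {1..K} \<Longrightarrow> n \<in> {1..N} \<Longrightarrow> card S = m \<Longrightarrow>
   \<exists>S'. card S' = m \<and> \<H>(U S') = \<H>(U S) \<and>
     same_law M (\<lambda>\<omega>. (Q n k S \<omega>, A n k S \<omega>, WW \<omega>, RS \<omega>))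
       (\<lambda>\<omega>. (Q n k' S' \<omega>, A n k' S' \<omega>, WW \<omega>, RS \<omega>))"
  using valid_unfolded by auto
lemma database_privacy: "k \<in> {1..K} \<Longrightarrow> card S = m \<Longrightarrow>
    \<I>(tup ({1..K} - {k}) W ; \<lambda>\<omega>. (F \<omega>, AT k S \<omega>, U S \<omega>)) = 0"
  using valid_unfolded by auto

lemma sf_WT:
  assumes T: "T \<subseteq> {1..K}" shows "simple_function M (WT T)"
proof (rule simple_function_tup)
  show "finite T" using T finite_subset by blast
  fix i assume "i \<in> T" then show "simple_function M (W i)" using T sf_W by blast
qed
lemma sf_WW: "simple_function M WW" by (rule sf_WT) simp
lemma sf_AT: "k \<in> {1..K} \<Longrightarrow> card S = m \<Longrightarrow> simple_function M (AT k S)"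
  by (rule simple_function_tup) (auto intro: sf_A)
lemma sf_QT: "k \<in> {1..K} \<Longrightarrow> card S = m \<Longrightarrow> simple_function M (QT k S)"
  by (rule simple_function_tup) (auto intro: sf_Q)
lemma sf_U: "simple_function M (U S)"
  unfolding RU_def using simple_function_compose1[OF sf_RS, of "\<lambda>r. restrict r S"] by simp
lemma sf_V: "simple_function M (V S)"
  unfolding RSminusRU_def using simple_function_compose1[OF sf_RS, of "\<lambda>r. restrict r (- S)"] by simp

lemma WT_eq_restrict: "T \<subseteq> {1..K} \<Longrightarrow> WT T \<omega> = restrict (WW \<omega>) T"
  by (auto simp: tup_def restrict_def fun_eq_iff)

lemma W_in_blocks: "\<omega> \<in> space M \<Longrightarrow> i \<in> {1..K} \<Longrightarrow> W i \<omega> \<in> PiE {0..<L} (\<lambda>_. UNIV)"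
  using messages_in_msg_space[of \<omega>] unfolding msg_space_def tup_def by (auto dest: PiE_mem)

lemma card_blocks: "card (PiE {0..<L} (\<lambda>_. UNIV :: 'f set)) = CARD('f) ^ L"
  by (simp add: card_PiE)

lemma card_msg_space: "card (msg_space K L :: (nat \<Rightarrow> nat \<Rightarrow> 'f) set) = CARD('f) ^ (L * K)"
  unfolding msg_space_def by (simp add: card_PiE card_blocks power_mult)

lemma log_card_power: "log b (real (CARD('f) ^ n)) = real n"
  using b_gt_1 unfolding b_def by (simp add: log_nat_power)

lemma entropy_messages: "\<H>(WW) = real K * real L"
proof -
  let ?c = "card (msg_space K L :: (nat \<Rightarrow> nat \<Rightarrow> 'f) set)"
  have c_pos: "0 < ?c" unfolding card_msg_space by simp
  have range: "WW ` space M = msg_space K L"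
  proof
    show "WW ` space M \<subseteq> msg_space K L" using messages_in_msg_space by auto
    show "msg_space K L \<subseteq> WW ` space M"
    proof
      fix w :: "nat \<Rightarrow> nat \<Rightarrow> 'f" assume "w \<in> msg_space K L"
      then have "prob_val WW w \<noteq> 0" using messages_uniform c_pos by simp
      then have "WW -` {w} \<inter> space M \<noteq> {}" by auto
      then show "w \<in> WW ` space M" by auto
    qed
  qed
  have "\<H>(WW) = - (\<Sum>w\<in>msg_space K L. prob_val WW w * log b (prob_val WW w))"
    using entropy_simple_eq[OF sf_WW] by (simp only: range)
  also have "\<dots> = - (\<Sum>w\<in>(msg_space K L :: (nat \<Rightarrow> nat \<Rightarrow> 'f) set). (1 / real ?c) * log b (1 / real ?c))"
    using messages_uniform by (intro arg_cong[where f=uminus] sum.cong refl) presburger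
  also have "\<dots> = log b (real ?c)"
    using c_pos b_gt_1 by (simp add: log_divide)
  also have "\<dots> = real K * real L" unfolding card_msg_space log_card_power by simp
  finally show ?thesis .
qed

lemma entropy_WT_le:
  assumes T: "T \<subseteq> {1..K}"
  shows "\<H>(WT T) \<le> real (card T) * real L"
proof -
  let ?blocks = "PiE T (\<lambda>_. PiE {0..<L} (\<lambda>_. UNIV :: 'f set))"
  have finT: "finite T" using T finite_subset by blast
  have range_fin: "finite (WT T ` space M)" using simple_functionD(1)[OF sf_WT[OF T]] .
  have "WT T ` space M \<subseteq> ?blocks"
  proof (rule image_subsetI)
    fix \<omega> assume "\<omega> \<in> space M"
    then have "\<forall>i\<in>T. W i \<omega> \<in> PiE {0..<L} (\<lambda>_. UNIV :: 'f set)" using W_in_blocks T by blast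
    then show "WT T \<omega> \<in> ?blocks" unfolding tup_def by (simp only: restrict_PiE_iff)
  qed
  then have "card (WT T ` space M) \<le> card ?blocks"
    by (rule card_mono[rotated]) (simp add: finT finite_PiE)
  also have "\<dots> = CARD('f) ^ (L * card T)"
    using finT by (simp add: card_PiE card_blocks power_mult)
  finally have card_le: "card (WT T ` space M) \<le> CARD('f) ^ (L * card T)" .
  have "0 < card (WT T ` space M)" using range_fin not_empty by (simp add: card_gt_0_iff)
  have "\<H>(WT T) \<le> log b (real (card (WT T ` space M)))"
    by (rule entropy_le_card[OF simple_distributedI[OF sf_WT[OF T] measure_nonneg refl]])
  also have "\<dots> \<le> log b (real (CARD('f) ^ (L * card T)))"
    using \<open>0 < card (WT T ` space M)\<close> card_le b_gt_1 by simp
  also have "\<dots> = real (card T) * real L" unfolding log_card_power by simp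
  finally show ?thesis .
qed

lemma entropy_WT:
  assumes T: "T \<subseteq> {1..K}"
  shows "\<H>(WT T) = real (card T) * real L"
proof -
  let ?T' = "{1..K} - T"
  have T': "?T' \<subseteq> {1..K}" by auto
  have "\<H>(WW) \<le> \<H>(\<lambda>\<omega>. (WT T \<omega>, WT ?T' \<omega>))"
    by (rule entropy_le_of_fun[OF simple_function_Pair[OF sf_WT[OF T] sf_WT[OF T']],
          where f="\<lambda>(a,c). restrict (\<lambda>i. if i \<in> T then a i else c i) {1..K}"])
       (auto simp: tup_def restrict_def fun_eq_iff)
  also have "\<dots> \<le> \<H>(WT T) + \<H>(WT ?T')"
    by (rule entropy_Pair_le_add[OF sf_WT[OF T] sf_WT[OF T']])
  also have "\<H>(WT ?T') \<le> (real K - real (card T)) * real L"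
    using entropy_WT_le[OF T'] T card_mono[of "{1..K}" T]
    by (simp add: card_Diff_subset finite_subset of_nat_diff)
  finally have "real (card T) * real L \<le> \<H>(WT T)"
    unfolding entropy_messages by (simp add: algebra_simps)
  with entropy_WT_le[OF T] show ?thesis by simp
qed

lemma entropy_messages_randomness:
  fixes S :: "'c set"
  assumes S: "card S = m"
  shows "\<H>(\<lambda>\<omega>. (WW \<omega>, F \<omega>, RS \<omega>)) = \<H>(WW) + \<H>(\<lambda>\<omega>. (F \<omega>, RS \<omega>))"
proof -
  have sFRU: "simple_function M (\<lambda>\<omega>. (F \<omega>, RS \<omega>, U S \<omega>))" using sf_F sf_RS sf_U by simp
  have "\<H>(\<lambda>\<omega>. (F \<omega>, RS \<omega>, U S \<omega>)) = \<H>(\<lambda>\<omega>. (F \<omega>, RS \<omega>))"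
    by (rule entropy_eq_of_funs[where f="\<lambda>(f,r). (f, r, restrict r S)" and g="\<lambda>(f,r,u). (f,r)"])
       (use sf_F sf_RS sf_U in \<open>auto simp: RU_def\<close>)
  moreover have "\<H>(\<lambda>\<omega>. ((F \<omega>, RS \<omega>, U S \<omega>), WW \<omega>)) = \<H>(\<lambda>\<omega>. (WW \<omega>, F \<omega>, RS \<omega>))"
    by (rule entropy_eq_of_funs[where f="\<lambda>(w,f,r). ((f, r, restrict r S), w)" and g="\<lambda>((f,r,u),w). (w,f,r)"])
       (use sf_F sf_RS sf_U sf_WW in \<open>auto simp: RU_def\<close>)
  ultimately show ?thesis
    using messages_indep_randomness[OF S] mutual_information_eq_entropy[OF sf_WW sFRU] by simp
qed

lemma entropy_strategy_randomness_WT: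
  fixes S :: "'c set"
  assumes S: "card S = m" and T: "T \<subseteq> {1..K}"
  shows "\<H>(\<lambda>\<omega>. (F \<omega>, RS \<omega>, WT T \<omega>)) = \<H>(\<lambda>\<omega>. (F \<omega>, RS \<omega>)) + \<H>(WT T)"
proof -
  note [simp] = sf_F sf_RS sf_WW sf_WT[OF T] sf_WW[simplified]
  have sFR: "simple_function M (\<lambda>\<omega>. (F \<omega>, RS \<omega>))" by simp
  have "\<H>(\<lambda>\<omega>. ((F \<omega>, RS \<omega>), WW \<omega>, WT T \<omega>)) + \<H>(WT T)
      \<le> \<H>(\<lambda>\<omega>. ((F \<omega>, RS \<omega>), WT T \<omega>)) + \<H>(\<lambda>\<omega>. (WW \<omega>, WT T \<omega>))"
    by (rule entropy_submodular[OF sFR sf_WW sf_WT[OF T]])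
  moreover have "\<H>(\<lambda>\<omega>. ((F \<omega>, RS \<omega>), WW \<omega>, WT T \<omega>)) = \<H>(\<lambda>\<omega>. (WW \<omega>, F \<omega>, RS \<omega>))"
    by (rule entropy_eq_of_funs[where f="\<lambda>(w,f,r). ((f,r),w,restrict w T)" and g="\<lambda>((f,r),w,wt). (w,f,r)"],
        simp, simp) (auto simp: WT_eq_restrict[OF T])
  moreover have "\<H>(\<lambda>\<omega>. (WW \<omega>, WT T \<omega>)) = \<H>(WW)"
    by (rule entropy_eq_of_funs[where f="\<lambda>w. (w,restrict w T)" and g="\<lambda>(w,wt). w"], simp, simp)
       (auto simp: WT_eq_restrict[OF T])
  moreover have "\<H>(\<lambda>\<omega>. (F \<omega>, RS \<omega>, WT T \<omega>)) = \<H>(\<lambda>\<omega>. ((F \<omega>, RS \<omega>), WT T \<omega>))"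
    by (rule entropy_eq_of_funs[where f="\<lambda>((f,r),w). (f,r,w)" and g="\<lambda>(f,r,w). ((f,r),w)"]) auto
  ultimately show ?thesis
    using entropy_Pair_le_add[OF sFR sf_WT[OF T]] entropy_messages_randomness[OF S] by simp
qed

lemma other_messages_indep:
  fixes S :: "'c set"
  assumes S: "card S = m" and T: "T \<subseteq> {1..K}"
  shows "\<H>(\<lambda>\<omega>. (WT ({1..K} - T) \<omega>, F \<omega>, RS \<omega>, WT T \<omega>))
       = \<H>(WT ({1..K} - T)) + \<H>(\<lambda>\<omega>. (F \<omega>, RS \<omega>, WT T \<omega>))"
proof -
  let ?T' = "{1..K} - T"
  have T': "?T' \<subseteq> {1..K}" by auto
  have "\<H>(\<lambda>\<omega>. (WT ?T' \<omega>, F \<omega>, RS \<omega>, WT T \<omega>)) = \<H>(\<lambda>\<omega>. (WW \<omega>, F \<omega>, RS \<omega>))"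
    by (rule entropy_eq_of_funs[where f="\<lambda>(w,f,r). (restrict w ?T', f, r, restrict w T)"
          and g="\<lambda>(w',f,r,w). (restrict (\<lambda>i. if i \<in> T then w i else w' i) {1..K}, f, r)"])
       (use T sf_WT[OF T] sf_WT[OF T'] sf_F sf_RS sf_WW in \<open>auto simp: tup_def restrict_def fun_eq_iff\<close>)
  moreover have "real (card ?T') * real L = (real K - real (card T)) * real L"
    using T card_mono[of "{1..K}" T] by (simp add: card_Diff_subset finite_subset of_nat_diff)
  ultimately show ?thesis
    using entropy_messages_randomness[OF S] entropy_strategy_randomness_WT[OF S T]
      entropy_messages entropy_WT[OF T] entropy_WT[OF T']
    by (simp add: algebra_simps)
qed

definition H_answers :: "nat \<Rightarrow> 'c set \<Rightarrow> nat set \<Rightarrow> real" where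
  "H_answers k S T
     = \<H>(\<lambda>\<omega>. (AT k S \<omega>, F \<omega>, RS \<omega>, WT T \<omega>)) - \<H>(\<lambda>\<omega>. (F \<omega>, RS \<omega>, WT T \<omega>))"

definition H_answer :: "nat \<Rightarrow> nat \<Rightarrow> 'c set \<Rightarrow> nat set \<Rightarrow> real" where
  "H_answer n k S T
     = \<H>(\<lambda>\<omega>. (A n k S \<omega>, Q n k S \<omega>, RS \<omega>, WT T \<omega>)) - \<H>(\<lambda>\<omega>. (Q n k S \<omega>, RS \<omega>, WT T \<omega>))"

lemma H_answer_same_law:
  assumes n: "n \<in> {1..N}" and k: "k \<in> {1..K}" and k': "k' \<in> {1..K}"
    and S: "card S = m" and S': "card S' = m" and T: "T \<subseteq> {1..K}"
    and law: "same_law M (\<lambda>\<omega>. (Q n k S \<omega>, A n k S \<omega>, WW \<omega>, RS \<omega>))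
      (\<lambda>\<omega>. (Q n k' S' \<omega>, A n k' S' \<omega>, WW \<omega>, RS \<omega>))"
  shows "H_answer n k S T = H_answer n k' S' T"
proof -
  note [simp] = sf_Q[OF n k S] sf_A[OF n k S] sf_Q[OF n k' S'] sf_A[OF n k' S'] sf_RS sf_WW[simplified]
    sf_WT[OF T]
  let ?g1 = "\<lambda>(q,a,w,r). (a,q,r,restrict w T)" and ?g2 = "\<lambda>(q,a,w,r). (q,r,restrict w T)"
  have H_comp: "H_answer n i S'' T = \<H>(\<lambda>\<omega>. ?g1 (Q n i S'' \<omega>, A n i S'' \<omega>, WW \<omega>, RS \<omega>))
      - \<H>(\<lambda>\<omega>. ?g2 (Q n i S'' \<omega>, A n i S'' \<omega>, WW \<omega>, RS \<omega>))"
    if "simple_function M (Q n i S'')" "simple_function M (A n i S'')" for i S''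
  proof -
    have "simple_function M (\<lambda>\<omega>. (A n i S'' \<omega>, Q n i S'' \<omega>, RS \<omega>, WT T \<omega>))"
      and "simple_function M (\<lambda>\<omega>. (Q n i S'' \<omega>, RS \<omega>, WT T \<omega>))"
      using that by simp_all
    then show ?thesis unfolding H_answer_def
      by (intro arg_cong2[where f=minus] entropy_cong) (simp_all add: WT_eq_restrict[OF T])
  qed
  show ?thesis
    using H_comp[of k S] H_comp[of k' S']
      entropy_comp_eq_of_same_law[OF _ _ law, of ?g1] entropy_comp_eq_of_same_law[OF _ _ law, of ?g2]
    by simp
qed

context
  fixes k :: nat and S :: "'c set" assumes k: "k \<in> {1..K}" and S: "card S = m"
begin

lemma sf_Qn: "n \<in> {1..N} \<Longrightarrow> simple_function M (Q n k S)" using sf_Q k S by blast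
lemma sf_An: "n \<in> {1..N} \<Longrightarrow> simple_function M (A n k S)" using sf_A k S by blast
lemma sf_ATk: "simple_function M (AT k S)" using sf_AT k S by blast
lemma sf_Wk: "simple_function M (W k)" using sf_W k by blast

lemma determined_query:
  assumes n: "n \<in> {1..N}"
  shows "determined_by (Q n k S) F"
proof -
  have QT_F: "determined_by (QT k S) F"
    by (rule determined_by_cond_entropy[OF sf_QT[OF k S] sf_F queries_by_strategy[OF k S]])
  have "determined_by (Q n k S) (QT k S)"
    by (rule determined_by_fun[where f="\<lambda>v. v n"]) (use n sf_Qn[OF n] sf_QT[OF k S] in \<open>auto simp: tup_def\<close>)
  then show ?thesis by (rule determined_by_trans[OF sf_Qn[OF n] sf_QT[OF k S] sf_F _ QT_F])
qed

lemma determined_answer: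
  assumes n: "n \<in> {1..N}"
  shows "determined_by (A n k S) (\<lambda>\<omega>. (Q n k S \<omega>, WW \<omega>, RS \<omega>))"
  by (rule determined_by_cond_entropy[OF sf_An[OF n] _ answer_by_query[OF k n S]])
     (use sf_Qn[OF n] sf_WW sf_RS in simp)

lemma determined_message: "determined_by (W k) (\<lambda>\<omega>. (F \<omega>, AT k S \<omega>, U S \<omega>))"
  by (rule determined_by_cond_entropy[OF sf_Wk _ decodability[OF k S]])
     (use sf_F sf_ATk sf_U in simp)

lemma entropy_database_privacy:
  "\<H>(\<lambda>\<omega>. (WT ({1..K} - {k}) \<omega>, F \<omega>, AT k S \<omega>, U S \<omega>))
     = \<H>(WT ({1..K} - {k})) + \<H>(\<lambda>\<omega>. (F \<omega>, AT k S \<omega>, U S \<omega>))"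
proof -
  have sFAU: "simple_function M (\<lambda>\<omega>. (F \<omega>, AT k S \<omega>, U S \<omega>))" using sf_F sf_ATk sf_U by simp
  have sW: "simple_function M (WT ({1..K} - {k}))" by (rule sf_WT) auto
  show ?thesis
    using database_privacy[OF k S] mutual_information_eq_entropy[OF sW sFAU] entropy_swap[OF sW sFAU]
    by simp
qed

lemma H_answers_nonneg: "T \<subseteq> {1..K} \<Longrightarrow> 0 \<le> H_answers k S T"
  unfolding H_answers_def
  using entropy_le_Pair_right[OF sf_ATk, of "\<lambda>\<omega>. (F \<omega>, RS \<omega>, WT T \<omega>)"] sf_F sf_RS sf_WT by simp

lemma H_answer_le_H_answers:
  assumes n: "n \<in> {1..N}" and T: "T \<subseteq> {1..K}"
  shows "H_answer n k S T \<le> H_answers k S T"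
proof -
  let ?T' = "{1..K} - T"
  let ?Y = "\<lambda>\<omega>. (F \<omega>, RS \<omega>, WT T \<omega>)" and ?Z = "\<lambda>\<omega>. (Q n k S \<omega>, RS \<omega>, WT T \<omega>)"
  have T': "?T' \<subseteq> {1..K}" by auto
  note sf = sf_Qn[OF n] sf_An[OF n] sf_ATk sf_F sf_RS sf_WT[OF T] sf_WT[OF T'] sf_WW
  have sY: "simple_function M ?Y" and sZ: "simple_function M ?Z" using sf by simp_all
  have "determined_by (Q n k S) ?Y"
    by (rule determined_by_finer[OF _ sf_F sY determined_query[OF n], where f=fst]) (use sf in auto)
  then have ZY: "determined_by ?Z ?Y"
    by (rule determined_by_fun_Pair[OF sZ sf_Qn[OF n] sY, where f="\<lambda>(q,(f,r,w)). (q,r,w)"]) auto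
  have QWR_XZ: "determined_by (\<lambda>\<omega>. (Q n k S \<omega>, WW \<omega>, RS \<omega>)) (\<lambda>\<omega>. (WT ?T' \<omega>, ?Z \<omega>))"
    by (rule determined_by_fun[where
          f="\<lambda>(w',(q,r,w)). (q, restrict (\<lambda>i. if i \<in> T then w i else w' i) {1..K}, r)"])
       (use T sf in \<open>auto simp: tup_def restrict_def fun_eq_iff\<close>)
  have A_XZ: "determined_by (A n k S) (\<lambda>\<omega>. (WT ?T' \<omega>, ?Z \<omega>))"
    by (rule determined_by_trans[OF _ _ _ determined_answer[OF n] QWR_XZ]) (use sf in simp_all)
  have "H_answer n k S T \<le> \<H>(\<lambda>\<omega>. (A n k S \<omega>, F \<omega>, RS \<omega>, WT T \<omega>)) - \<H>(?Y)"
    unfolding H_answer_def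
    by (rule cond_entropy_le_of_indep[OF sf_WT[OF T'] sY sZ sf_An[OF n]
          other_messages_indep[OF S T] ZY A_XZ])
  also have "\<dots> \<le> H_answers k S T"
    unfolding H_answers_def
    by (simp, rule entropy_le_of_fun[where f="\<lambda>(z,f,r,w). (z n, f, r, w)"])
       (use n sf in \<open>auto simp: tup_def\<close>)
  finally show ?thesis .
qed

lemma H_answers_le_sum:
  assumes T: "T \<subseteq> {1..K}"
  shows "H_answers k S T \<le> (\<Sum>n\<in>{1..N}. H_answer n k S T)"
proof -
  let ?C = "\<lambda>\<omega>. (F \<omega>, RS \<omega>, WT T \<omega>)"
  have sC: "simple_function M ?C" using sf_F sf_RS sf_WT[OF T] by simp
  have "H_answers k S T \<le> (\<Sum>n\<in>{1..N}. \<H>(\<lambda>\<omega>. (A n k S \<omega>, ?C \<omega>)) - \<H>(?C))"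
    unfolding H_answers_def by (rule cond_entropy_tup_le_sum[OF _ _ sC]) (auto intro: sf_An)
  also have "\<dots> \<le> (\<Sum>n\<in>{1..N}. H_answer n k S T)"
  proof (rule sum_mono)
    fix n assume n: "n \<in> {1..N}"
    have sQ: "simple_function M (Q n k S)" by (rule sf_Qn[OF n])
    have Q_C: "determined_by (Q n k S) ?C"
      by (rule determined_by_finer[OF sQ sf_F sC determined_query[OF n], where f=fst]) simp
    have QRW_C: "determined_by (\<lambda>\<omega>. (Q n k S \<omega>, RS \<omega>, WT T \<omega>)) ?C"
      by (rule determined_by_fun_Pair[OF _ sQ sC Q_C, where f="\<lambda>(q,(f,r,w)). (q,r,w)"])
         (use sQ sf_RS sf_WT[OF T] in auto)
    show "\<H>(\<lambda>\<omega>. (A n k S \<omega>, ?C \<omega>)) - \<H>(?C) \<le> H_answer n k S T"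
      unfolding H_answer_def
      by (rule cond_entropy_le_finer[OF sf_An[OF n] sC _ QRW_C]) (use sQ sf_RS sf_WT[OF T] in simp)
  qed
  finally show ?thesis .
qed

lemma H_answers_insert:
  assumes T: "T \<subseteq> {1..K}" and kT: "k \<notin> T"
  shows "H_answers k S T = real L + H_answers k S (insert k T)"
proof -
  have T': "insert k T \<subseteq> {1..K}" using T k by auto
  let ?X1 = "\<lambda>\<omega>. (AT k S \<omega>, F \<omega>, RS \<omega>, WT T \<omega>)"
  let ?X2 = "\<lambda>\<omega>. (AT k S \<omega>, F \<omega>, RS \<omega>, WT (insert k T) \<omega>)"
  note sf = sf_F sf_RS sf_WT[OF T] sf_WT[OF T'] sf_ATk sf_Wk sf_U
  have s1: "simple_function M ?X1" and s2: "simple_function M ?X2" using sf by simp_all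
  have "determined_by (W k) ?X1"
    by (rule determined_by_finer[OF _ _ _ determined_message, where f="\<lambda>(a,f,r,w). (f,a,restrict r S)"])
       (use sf in \<open>auto simp: RU_def\<close>)
  then have "determined_by ?X2 ?X1"
    by (rule determined_by_fun_Pair[OF s2 sf_Wk s1, where f="\<lambda>(wk,(a,f,r,wt)). (a,f,r,wt(k := wk))"])
       (auto simp: tup_def restrict_def fun_eq_iff)
  then have "\<H>(?X2) = \<H>(?X1)"
    by (rule entropy_eq_of_determined[OF s2 s1, where g="\<lambda>(a,f,r,wt). (a,f,r,restrict wt T)"])
       (use T in \<open>auto simp: tup_def restrict_def fun_eq_iff\<close>)
  moreover have "card (insert k T) = card T + 1" using T kT finite_subset by fastforce
  ultimately show ?thesis
    unfolding H_answers_def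
    using entropy_strategy_randomness_WT[OF S T] entropy_strategy_randomness_WT[OF S T']
      entropy_WT[OF T] entropy_WT[OF T']
    by (simp add: algebra_simps)
qed

lemma other_messages_indep_answers:
  "\<H>(\<lambda>\<omega>. (WT ({1..K} - {k}) \<omega>, AT k S \<omega>, F \<omega>, U S \<omega>, W k \<omega>))
     = \<H>(WT ({1..K} - {k})) + \<H>(\<lambda>\<omega>. (AT k S \<omega>, F \<omega>, U S \<omega>, W k \<omega>))"
proof -
  let ?FAU = "\<lambda>\<omega>. (F \<omega>, AT k S \<omega>, U S \<omega>)" and ?Wo = "WT ({1..K} - {k})"
  have sWo: "simple_function M ?Wo" by (rule sf_WT) auto
  note sf = sWo sf_F sf_ATk sf_Wk sf_U
  have sFAU: "simple_function M ?FAU" and sWoFAU: "simple_function M (\<lambda>\<omega>. (?Wo \<omega>, ?FAU \<omega>))"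
    and sAFUW: "simple_function M (\<lambda>\<omega>. (AT k S \<omega>, F \<omega>, U S \<omega>, W k \<omega>))"
    using sf by simp_all
  have "\<H>(\<lambda>\<omega>. (AT k S \<omega>, F \<omega>, U S \<omega>, W k \<omega>)) = \<H>(?FAU)"
    by (rule entropy_eq_of_determined[OF sAFUW sFAU determined_by_fun_Pair[OF sAFUW sf_Wk sFAU
          determined_message, where f="\<lambda>(wk,(f,a,u)). (a,f,u,wk)"], where g="\<lambda>(a,f,u,wk). (f,a,u)"])
       auto
  moreover have "\<H>(\<lambda>\<omega>. (?Wo \<omega>, AT k S \<omega>, F \<omega>, U S \<omega>, W k \<omega>)) = \<H>(\<lambda>\<omega>. (?Wo \<omega>, ?FAU \<omega>))"
  proof (rule entropy_eq_of_determined[OF _ sWoFAU, where g="\<lambda>(wo,a,f,u,wk). (wo,f,a,u)"])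
    have Wk_WoFAU: "determined_by (W k) (\<lambda>\<omega>. (?Wo \<omega>, ?FAU \<omega>))"
      by (rule determined_by_finer[OF sf_Wk sFAU sWoFAU determined_message, where f=snd]) simp
    show "determined_by (\<lambda>\<omega>. (?Wo \<omega>, AT k S \<omega>, F \<omega>, U S \<omega>, W k \<omega>)) (\<lambda>\<omega>. (?Wo \<omega>, ?FAU \<omega>))"
      by (rule determined_by_fun_Pair[OF _ sf_Wk sWoFAU Wk_WoFAU,
            where f="\<lambda>(wk,(wo,(f,a,u))). (wo,a,f,u,wk)"]) (use sf in simp_all)
  qed (use sf in simp_all)
  ultimately show ?thesis using entropy_database_privacy by simp
qed

lemma answers_determined_by_key:
  "determined_by (AT k S) (\<lambda>\<omega>. (WT ({1..K} - {k}) \<omega>, V S \<omega>, F \<omega>, U S \<omega>, W k \<omega>))"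
  (is "determined_by _ ?Z")
proof (rule determined_by_tup)
  have "{1..K} - {k} \<subseteq> {1..K}" by auto
  note sf = sf_F sf_RS sf_WT[OF this] sf_Wk sf_U sf_V sf_WW
  show sZ: "simple_function M ?Z" using sf by simp
  fix n assume n: "n \<in> {1..N}"
  have Q_Z: "determined_by (Q n k S) ?Z"
    by (rule determined_by_finer[OF sf_Qn[OF n] sf_F sZ determined_query[OF n],
          where f="\<lambda>(wo,v,f,u,wk). f"]) auto
  have QWR_Z: "determined_by (\<lambda>\<omega>. (Q n k S \<omega>, WW \<omega>, RS \<omega>)) ?Z"
    by (rule determined_by_fun_Pair[OF _ sf_Qn[OF n] sZ Q_Z, where f="\<lambda>(q,(wo,v,f,u,wk)).
          (q, restrict (\<lambda>i. if i = k then wk else wo i) {1..K}, \<lambda>c. if c \<in> S then u c else v c)"])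
       (use sf sf_Qn[OF n] in \<open>auto simp: tup_def RU_def RSminusRU_def restrict_def fun_eq_iff\<close>)
  show "determined_by (A n k S) ?Z"
    by (rule determined_by_trans[OF sf_An[OF n] _ sZ determined_answer[OF n] QWR_Z])
       (use sf sf_Qn[OF n] in simp)
qed (auto intro: sf_An)

lemma H_answers_singleton_le: "H_answers k S {k} \<le> \<H>(V S)"
proof -
  let ?C = "\<lambda>\<omega>. (F \<omega>, RS \<omega>, WT {k} \<omega>)" and ?C' = "\<lambda>\<omega>. (F \<omega>, U S \<omega>, W k \<omega>)"
  have "{k} \<subseteq> {1..K}" "{1..K} - {k} \<subseteq> {1..K}" using k by auto
  note sf = sf_F sf_RS sf_WT[OF this(1)] sf_WT[OF this(2)] sf_Wk sf_U sf_V
  have sC: "simple_function M ?C" and sC': "simple_function M ?C'" using sf by simp_all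
  have "determined_by ?C' ?C"
    by (rule determined_by_fun[where f="\<lambda>(f,r,wt). (f, restrict r S, wt k)"])
       (use sf in \<open>auto simp: RU_def tup_def\<close>)
  then have "H_answers k S {k} \<le> \<H>(\<lambda>\<omega>. (AT k S \<omega>, ?C' \<omega>)) - \<H>(?C')"
    unfolding H_answers_def by (rule cond_entropy_le_finer[OF sf_ATk sC sC'])
  also have "\<dots> \<le> \<H>(V S)"
    by (rule cond_entropy_le_entropy_key[OF _ sf_V sC' sf_ATk other_messages_indep_answers
          answers_determined_by_key]) (use sf in simp)
  finally show ?thesis .
qed

end

lemma H_answers_step:
  assumes k: "k \<in> {1..K}" and T: "T \<subseteq> {1..K}" and k': "k' \<in> {1..K}" "k' \<notin> T"
    and S': "card S' = m" and bound: "real L * c \<le> H_answers k' S' (insert k' T)"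
  shows "\<exists>S. card S = m \<and> \<H>(U S) = \<H>(U S') \<and> real L * (1 + c) / real N \<le> H_answers k S T"
proof -
  have "real (card {1..N}) * (real L * (1 + c) / real N) = real L * (1 + c)"
    using N_ge_1 by simp
  also have "\<dots> \<le> H_answers k' S' T"
    using bound H_answers_insert[OF k'(1) S' T k'(2)] by (simp add: algebra_simps)
  also have "\<dots> \<le> (\<Sum>n\<in>{1..N}. H_answer n k' S' T)"
    by (rule H_answers_le_sum[OF k'(1) S' T])
  finally have "\<exists>n\<in>{1..N}. real L * (1 + c) / real N \<le> H_answer n k' S' T"
    using N_ge_1 by (intro exists_ge_of_sum_ge) auto
  then obtain n where n: "n \<in> {1..N}"
    and bound_n: "real L * (1 + c) / real N \<le> H_answer n k' S' T" by blast
  obtain S where S: "card S = m" "\<H>(U S) = \<H>(U S')"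
    and law: "same_law M (\<lambda>\<omega>. (Q n k' S' \<omega>, A n k' S' \<omega>, WW \<omega>, RS \<omega>))
      (\<lambda>\<omega>. (Q n k S \<omega>, A n k S \<omega>, WW \<omega>, RS \<omega>))"
    using user_privacy[OF k'(1) k n S'] by blast
  have "H_answer n k' S' T = H_answer n k S T"
    by (rule H_answer_same_law[OF n k'(1) k S' S(1) T law])
  also have "\<dots> \<le> H_answers k S T"
    by (rule H_answer_le_H_answers[OF k S(1) n T])
  finally show ?thesis using bound_n S by (intro exI[of _ S]) simp
qed

text \<open>The user randomness is carried along because user privacy only provides, for each
  database, some admissible S' of the same entropy, not S itself.\<close>

lemma H_answers_lower_bound:
  fixes S0 :: "'c set"
  assumes S0: "card S0 = m" and "T \<subseteq> {1..K}" and "card T + j = K" and "k \<in> T"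
  shows "\<exists>S. card S = m \<and> \<H>(U S) = \<H>(U S0) \<and> real L * (\<Sum>i=1..j. 1 / real N ^ i) \<le> H_answers k S T"
  using assms(2-4)
proof (induction j arbitrary: T k)
  case 0
  then have "k \<in> {1..K}" by auto
  with S0 0 have "0 \<le> H_answers k S0 T" by (intro H_answers_nonneg) auto
  with S0 show ?case by auto
next
  case (Suc j)
  have "\<not> {1..K} \<subseteq> T"
  proof
    assume "{1..K} \<subseteq> T"
    then have "card {1..K} \<le> card T" using Suc.prems(1) by (intro card_mono) (auto intro: finite_subset)
    with Suc.prems(2) show False by simp
  qed
  then obtain k' where k': "k' \<in> {1..K}" "k' \<notin> T" by blast
  have "insert k' T \<subseteq> {1..K}" using Suc.prems(1) k'(1) by simp
  moreover have "card (insert k' T) + j = K"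
    using Suc.prems(1,2) k'(2) finite_subset[OF Suc.prems(1)] by simp
  ultimately obtain S' where S': "card S' = m" "\<H>(U S') = \<H>(U S0)"
    and bound: "real L * (\<Sum>i=1..j. 1 / real N ^ i) \<le> H_answers k' S' (insert k' T)"
    using Suc.IH by blast
  have "k \<in> {1..K}" using Suc.prems by auto
  have "real N \<noteq> 0" using N_ge_1 by simp
  with H_answers_step[OF \<open>k \<in> {1..K}\<close> Suc.prems(1) k' S'(1) bound] S'(2) show ?case
    by (subst sum_inverse_powers_Suc) auto
qed

lemma randomness_lower_bound:
  fixes S :: "'c set"
  assumes "2 \<le> K" and S: "card S = m"
  shows "real L * (\<Sum>i=1..K-1. 1 / real N ^ i) \<le> \<H>(RS) - \<H>(U S)"
proof -
  have one: "1 \<in> {1..K}" using assms(1) by simp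
  obtain S' where S': "card S' = m" "\<H>(U S') = \<H>(U S)"
    and bound: "real L * (\<Sum>i=1..K-1. 1 / real N ^ i) \<le> H_answers 1 S' {1}"
    using H_answers_lower_bound[OF S, of "{1}" "K - 1" 1] assms(1) by auto
  note bound
  also have "\<dots> \<le> \<H>(V S')" by (rule H_answers_singleton_le[OF one S'(1)])
  finally show ?thesis using entropy_V[OF S'(1)] S'(2) by simp
qed

end

theorem lemma4:
  fixes M :: "'a measure" and N K L m :: nat
    and W :: "nat \<Rightarrow> 'a \<Rightarrow> (nat \<Rightarrow> 'f::{finite,field})"
    and RS :: "'a \<Rightarrow> ('c::finite \<Rightarrow> 'r)"
    and F :: "'a \<Rightarrow> 'g"
    and Q :: "nat \<Rightarrow> nat \<Rightarrow> 'c set \<Rightarrow> 'a \<Rightarrow> 'q"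
    and A :: "nat \<Rightarrow> nat \<Rightarrow> 'c set \<Rightarrow> 'a \<Rightarrow> 'ans"
    and S :: "'c set"
  assumes "N \<ge> 1" and "K \<ge> 2" and "L \<ge> 1"
    and "valid_scheme M N K L m W RS F Q A"
    and "card S = m"
  shows "Ent M (real CARD('f)) RS / real L - Ent M (real CARD('f)) (RU RS S) / real L
           \<ge> (\<Sum>i=1..K-1. 1 / real N ^ i)"
proof -
  have "prob_space M" using assms(4) unfolding valid_scheme_def Let_def by blast
  moreover have "card {0::'f, 1} \<le> CARD('f)" by (rule card_mono) auto
  ultimately have "information_space M (real CARD('f))"
    by (simp add: information_space_def information_space_axioms_def)
  then interpret spir_scheme M "real CARD('f)" N K L m W RS F Q A
    by (rule spir_scheme.intro) (use assms(1,4) in \<open>simp add: spir_scheme_axioms_def\<close>)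
  have "real L * (\<Sum>i=1..K-1. 1 / real N ^ i)
      \<le> Ent M (real CARD('f)) RS - Ent M (real CARD('f)) (RU RS S)"
    using randomness_lower_bound[OF assms(2,5)] unfolding Ent_def .
  then show ?thesis
    using assms(3) by (simp add: diff_divide_distrib[symmetric] pos_le_divide_eq mult.commute)
qed

end
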